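(* Let $\mathcal{R}$ be a set of rules over a finite language and let $\mathit{applyFolding}(\rho,\mathcal{R})$ be the procedure: while $\mathit{foldable}(\rho,\mathcal{R})$ holds, set $\rho:=\mathit{fold}(\rho,\mathcal{R})$; then return $\rho$. Suppose $\mathit{applyFolding}$ is bounded. Then $\mathit{applyFolding}(\rho,\mathcal{R})$ terminates and returns an intensional rule.
   Context: Rules are in normalised form $p_0(X_0)\leftarrow eq_1,\dots,eq_k,p_1(X_1),\dots,p_n(X_n)$ with equalities $eq_i$ between terms; a ground fact $p(t)\leftarrow$ is written $p(X)\leftarrow X=t$ and such rules are non-intensional, while intensional rules are non-ground rule schemata. $bd(\rho)$ is the body of $\rho$. Folding (R2): given distinct rules $\rho_1: H\leftarrow Eqs_1,B_1,B_2$ and $\rho_2: K\leftarrow Eqs_1,Eqs_2,B_1$ with $\mathit{vars}(Eqs_2)\cap\mathit{vars}(\rho_1)=\emptyset$ ($Eqs$ sets of equalities, $B$ sets of atoms), $\rho_1$ is replaced by $\rho_3: H\leftarrow Eqs_2,K,B_2$. $\mathit{foldable}(\rho,\mathcal{R})$ is a boolean function such that $\mathit{foldable}(\rho,\mathcal{R})$ implies R2 can be applied to $\rho$ using a rule in $\mathcal{R}$, and $\mathit{fold}(\rho,\mathcal{R})$ is a rule obtained by applying R2 to $\rho$ using a rule in $\mathcal{R}$ (possibly nondeterministically). For a sequence $\rho_0,\rho_1,\dots$ with $\rho_{i+1}=\mathit{fold}(\rho_i,\mathcal{R})$, define $\mathbb{B}_0=bd(\rho_0)$ and $\mathbb{B}_{i+1}=\mathbb{B}_i\cup\{Eqs_2,K\}$,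 where $B_1,Eqs_1,Eqs_2,K$ are as in the R2 step producing $\rho_{i+1}$ and $\{B_1,Eqs_1\}\subseteq\mathbb{B}_i$. $\mathit{applyFolding}$ is bounded if: (F1) if $\rho$ is non-intensional then $\mathit{foldable}(\rho,\mathcal{R})$ is true; (F2) for all $i\ge0$, if $\mathit{foldable}(\rho_i,\mathcal{R})$ then (i) $K\notin\mathbb{B}_i$, and (ii) for any variables $X,Y$ and constant $a$, if $X=a\in Eqs_2$ then $Y=a\notin\mathbb{B}_i$. *)

theory Defs
  imports Main
begin

datatype ('f,'v) trm = Var 'v | Fn 'f "('f,'v) trm list"

text \<open>A constant a is the nullary application Fn a [].\<close>

datatype ('p,'v) atm = Atom 'p "'v list"

datatype ('f,'v) eqn = Eqn "('f,'v) trm" "('f,'v) trm"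

record ('p,'f,'v) rule =
  rhead :: "('p,'v) atm"
  reqs  :: "('f,'v) eqn set"
  rats  :: "('p,'v) atm set"

datatype ('p,'f,'v) lit = LEq "('f,'v) eqn" | LAt "('p,'v) atm"

definition bd :: "('p,'f,'v) rule \<Rightarrow> ('p,'f,'v) lit set" where
  "bd \<rho> = LEq ` reqs \<rho> \<union> LAt ` rats \<rho>"

fun tvars :: "('f,'v) trm \<Rightarrow> 'v set" where
  "tvars (Var x) = {x}"
| "tvars (Fn f ts) = (\<Union>t\<in>set ts. tvars t)"

definition ground :: "('f,'v) trm \<Rightarrow> bool" where
  "ground t \<longleftrightarrow> tvars t = {}"

fun eqvars :: "('f,'v) eqn \<Rightarrow> 'v set" where
  "eqvars (Eqn s t) = tvars s \<union> tvars t"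

fun avars :: "('p,'v) atm \<Rightarrow> 'v set" where
  "avars (Atom p xs) = set xs"

definition evars :: "('f,'v) eqn set \<Rightarrow> 'v set" where
  "evars E = (\<Union>e\<in>E. eqvars e)"

definition rvars :: "('p,'f,'v) rule \<Rightarrow> 'v set" where
  "rvars \<rho> = avars (rhead \<rho>) \<union> evars (reqs \<rho>) \<union> (\<Union>a\<in>rats \<rho>. avars a)"

record ('p,'f,'v) lang =
  lpreds :: "'p set"
  lparity :: "'p \<Rightarrow> nat"
  lfuns :: "'f set"
  lfarity :: "'f \<Rightarrow> nat"
  lvars :: "'v set"

definition finite_lang :: "('p,'f,'v) lang \<Rightarrow> bool" where
  "finite_lang L \<longleftrightarrow> finite (lpreds L) \<and> finite (lfuns L) \<and> finite (lvars L)"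

fun trm_over :: "('p,'f,'v) lang \<Rightarrow> ('f,'v) trm \<Rightarrow> bool" where
  "trm_over L (Var x) \<longleftrightarrow> x \<in> lvars L"
| "trm_over L (Fn f ts) \<longleftrightarrow> f \<in> lfuns L \<and> length ts = lfarity L f \<and> (\<forall>t\<in>set ts. trm_over L t)"

fun atm_over :: "('p,'f,'v) lang \<Rightarrow> ('p,'v) atm \<Rightarrow> bool" where
  "atm_over L (Atom p xs) \<longleftrightarrow> p \<in> lpreds L \<and> length xs = lparity L p \<and> set xs \<subseteq> lvars L"

fun eqn_over :: "('p,'f,'v) lang \<Rightarrow> ('f,'v) eqn \<Rightarrow> bool" where
  "eqn_over L (Eqn s t) \<longleftrightarrow> trm_over L s \<and> trm_over L t"

definition rule_over :: "('p,'f,'v) lang \<Rightarrow> ('p,'f,'v) rule \<Rightarrow> bool" where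
  "rule_over L \<rho> \<longleftrightarrow> atm_over L (rhead \<rho>) \<and> (\<forall>e\<in>reqs \<rho>. eqn_over L e)
      \<and> (\<forall>a\<in>rats \<rho>. atm_over L a)"

text \<open>Non-intensional: a ground fact p(t) <- written p(X) <- X = t.\<close>
definition nonintensional :: "('p,'f,'v) rule \<Rightarrow> bool" where
  "nonintensional \<rho> \<longleftrightarrow> rats \<rho> = {} \<and>
     (\<exists>p xs ts. rhead \<rho> = Atom p xs \<and> distinct xs \<and> length ts = length xs \<and>
        (\<forall>t\<in>set ts. ground t) \<and> reqs \<rho> = set (map2 (\<lambda>x t. Eqn (Var x) t) xs ts))"

definition intensional :: "('p,'f,'v) rule \<Rightarrow> bool" where
  "intensional \<rho> \<longleftrightarrow> \<not> nonintensional \<rho>"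

record ('p,'f,'v) fold_data =
  fE1 :: "('f,'v) eqn set"
  fE2 :: "('f,'v) eqn set"
  fB1 :: "('p,'v) atm set"
  fB2 :: "('p,'v) atm set"
  fK  :: "('p,'v) atm"

definition r2_step :: "('p,'f,'v) rule set \<Rightarrow> ('p,'f,'v) rule \<Rightarrow> ('p,'f,'v) fold_data
                        \<Rightarrow> ('p,'f,'v) rule \<Rightarrow> bool" where
  "r2_step R \<rho>1 d \<rho>3 \<longleftrightarrow> (\<exists>\<rho>2\<in>R. \<rho>2 \<noteq> \<rho>1 \<and>
      reqs \<rho>1 = fE1 d \<and> rats \<rho>1 = fB1 d \<union> fB2 d \<and>
      rhead \<rho>2 = fK d \<and> reqs \<rho>2 = fE1 d \<union> fE2 d \<and> rats \<rho>2 = fB1 d \<and>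
      evars (fE2 d) \<inter> rvars \<rho>1 = {} \<and>
      \<rho>3 = \<lparr>rhead = rhead \<rho>1, reqs = fE2 d, rats = insert (fK d) (fB2 d)\<rparr>)"

text \<open>Specification of foldable and (possibly nondeterministic) fold:
  fold rho R d rho' means rho' is a possible value of fold(rho,R), obtained by an
  R2 step with data d.\<close>
definition fold_spec ::
  "(('p,'f,'v) rule \<Rightarrow> ('p,'f,'v) rule set \<Rightarrow> bool) \<Rightarrow>
   (('p,'f,'v) rule \<Rightarrow> ('p,'f,'v) rule set \<Rightarrow> ('p,'f,'v) fold_data \<Rightarrow> ('p,'f,'v) rule \<Rightarrow> bool) \<Rightarrow>
   ('p,'f,'v) rule set \<Rightarrow> bool" where
  "fold_spec foldable foldR R \<longleftrightarrow>
     (\<forall>\<rho>. foldable \<rho> R \<longrightarrow> (\<exists>d \<rho>'. foldR \<rho> R d \<rho>')) \<and>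
     (\<forall>\<rho> d \<rho>'. foldable \<rho> R \<longrightarrow> foldR \<rho> R d \<rho>' \<longrightarrow> r2_step R \<rho> d \<rho>')"

text \<open>The first n iterations of the while loop of applyFolding.\<close>
definition fold_run ::
  "(('p,'f,'v) rule \<Rightarrow> ('p,'f,'v) rule set \<Rightarrow> bool) \<Rightarrow>
   (('p,'f,'v) rule \<Rightarrow> ('p,'f,'v) rule set \<Rightarrow> ('p,'f,'v) fold_data \<Rightarrow> ('p,'f,'v) rule \<Rightarrow> bool) \<Rightarrow>
   ('p,'f,'v) rule set \<Rightarrow> (nat \<Rightarrow> ('p,'f,'v) rule) \<Rightarrow> (nat \<Rightarrow> ('p,'f,'v) fold_data) \<Rightarrow> nat \<Rightarrow> bool" where
  "fold_run foldable foldR R rs ds n \<longleftrightarrow>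
     (\<forall>i<n. foldable (rs i) R \<and> foldR (rs i) R (ds i) (rs (Suc i)))"

fun BB :: "(nat \<Rightarrow> ('p,'f,'v) rule) \<Rightarrow> (nat \<Rightarrow> ('p,'f,'v) fold_data) \<Rightarrow> nat \<Rightarrow> ('p,'f,'v) lit set" where
  "BB rs ds 0 = bd (rs 0)"
| "BB rs ds (Suc i) = BB rs ds i \<union> LEq ` fE2 (ds i) \<union> {LAt (fK (ds i))}"

definition bounded ::
  "('p,'f,'v) lang \<Rightarrow>
   (('p,'f,'v) rule \<Rightarrow> ('p,'f,'v) rule set \<Rightarrow> bool) \<Rightarrow>
   (('p,'f,'v) rule \<Rightarrow> ('p,'f,'v) rule set \<Rightarrow> ('p,'f,'v) fold_data \<Rightarrow> ('p,'f,'v) rule \<Rightarrow> bool) \<Rightarrow>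
   ('p,'f,'v) rule set \<Rightarrow> bool" where
  "bounded L foldable foldR R \<longleftrightarrow>
     (\<forall>\<rho>. rule_over L \<rho> \<longrightarrow> nonintensional \<rho> \<longrightarrow> foldable \<rho> R) \<and>
     (\<forall>rs ds n. rule_over L (rs 0) \<longrightarrow> fold_run foldable foldR R rs ds n \<longrightarrow>
        (\<forall>i<n. LAt (fK (ds i)) \<notin> BB rs ds i \<and>
               (\<forall>x y a. Eqn (Var x) (Fn a []) \<in> fE2 (ds i) \<longrightarrow>
                        LEq (Eqn (Var y) (Fn a [])) \<notin> BB rs ds i)))"

end

theory Submission
  imports Defs
begin

text \<open>Every fold of the loop adds the head K of a rule of R to the accumulated body; by (F2)(i)
  this atom is new, so the heads introduced along a run are pairwise distinct. They are all atoms
  over the finite language, of which there are only finitely many, so the loop stops. A rule on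
  which it stops is not foldable, hence intensional by (F1).\<close>

lemma finite_atm_over:
  assumes "finite_lang L"
  shows "finite {a. atm_over L a}"
proof -
  let ?args = "SIGMA p:lpreds L. {xs. set xs \<subseteq> lvars L \<and> length xs = lparity L p}"
  have "finite ?args"
    using assms unfolding finite_lang_def by (auto intro: finite_lists_length_eq)
  moreover have "{a. atm_over L a} \<subseteq> (\<lambda>(p, xs). Atom p xs) ` ?args"
  proof
    fix a assume "a \<in> {a. atm_over L a}"
    then show "a \<in> (\<lambda>(p, xs). Atom p xs) ` ?args" by (cases a) (auto intro!: image_eqI)
  qed
  ultimately show ?thesis by (meson finite_imageI finite_subset)
qed

lemma mono_BB: "mono (BB rs ds)"
  unfolding mono_iff_le_Suc by auto

lemma inj_fold_heads:
  assumes "\<And>i. LAt (fK (ds i)) \<notin> BB rs ds i"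
  shows "inj (\<lambda>i. fK (ds i))"
proof (rule linorder_injI)
  fix i j :: nat assume "i < j"
  then have "BB rs ds (Suc i) \<subseteq> BB rs ds j" using mono_BB[of rs ds] by (meson Suc_leI monoD)
  then have "LAt (fK (ds i)) \<in> BB rs ds j" by auto
  then show "fK (ds i) \<noteq> fK (ds j)" using assms[of j] by auto
qed

lemma r2_step_rule_over:
  assumes "\<forall>\<rho>\<in>R. rule_over L \<rho>" "r2_step R \<rho> d \<rho>'" "rule_over L \<rho>"
  shows "rule_over L \<rho>'" "atm_over L (fK d)"
proof -
  obtain \<rho>2 where "\<rho>2 \<in> R" "rats \<rho> = fB1 d \<union> fB2 d" "rhead \<rho>2 = fK d"
    "reqs \<rho>2 = fE1 d \<union> fE2 d"
    "\<rho>' = \<lparr>rhead = rhead \<rho>, reqs = fE2 d, rats = insert (fK d) (fB2 d)\<rparr>"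
    using assms(2) unfolding r2_step_def by blast
  with assms(1,3) show "rule_over L \<rho>'" "atm_over L (fK d)"
    unfolding rule_over_def by auto
qed

lemma fold_run_r2_step:
  assumes "fold_spec foldable foldR R" "fold_run foldable foldR R rs ds n" "i < n"
  shows "r2_step R (rs i) (ds i) (rs (Suc i))"
  using assms unfolding fold_spec_def fold_run_def by blast

lemma fold_run_rule_over:
  assumes "\<forall>\<rho>\<in>R. rule_over L \<rho>" "fold_spec foldable foldR R"
    "rule_over L (rs 0)" "fold_run foldable foldR R rs ds n"
  shows "i \<le> n \<Longrightarrow> rule_over L (rs i)"
proof (induction i)
  case 0 then show ?case using assms(3) by simp
next
  case (Suc i)
  then show ?case
    using r2_step_rule_over(1)[OF assms(1) fold_run_r2_step[OF assms(2,4)]] by simp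
qed

lemma fold_run_head_over:
  assumes "\<forall>\<rho>\<in>R. rule_over L \<rho>" "fold_spec foldable foldR R"
    "rule_over L (rs 0)" "fold_run foldable foldR R rs ds n" "i < n"
  shows "atm_over L (fK (ds i))"
  using r2_step_rule_over(2)[OF assms(1) fold_run_r2_step[OF assms(2,4,5)]]
    fold_run_rule_over[OF assms(1-4)] assms(5) by simp

theorem proposition3:
  fixes L :: "('p,'f,'v) lang"
    and R :: "('p,'f,'v) rule set"
    and \<rho>0 :: "('p,'f,'v) rule"
  assumes "finite_lang L"
    and "\<forall>\<rho>\<in>R. rule_over L \<rho>"
    and "rule_over L \<rho>0"
    and "fold_spec foldable foldR R"
    and "bounded L foldable foldR R"
  shows "\<not> (\<exists>rs ds. rs 0 = \<rho>0 \<and> (\<forall>i. foldable (rs i) R \<and> foldR (rs i) R (ds i) (rs (Suc i))))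
       \<and> (\<forall>rs ds n. rs 0 = \<rho>0 \<longrightarrow> fold_run foldable foldR R rs ds n \<longrightarrow> \<not> foldable (rs n) R
           \<longrightarrow> intensional (rs n))"
proof (intro conjI notI allI impI)
  assume "\<exists>rs ds. rs 0 = \<rho>0 \<and> (\<forall>i. foldable (rs i) R \<and> foldR (rs i) R (ds i) (rs (Suc i)))"
  then obtain rs ds where "rs 0 = \<rho>0" and "\<And>n. fold_run foldable foldR R rs ds n"
    unfolding fold_run_def by blast
  with assms have "LAt (fK (ds i)) \<notin> BB rs ds i" and "atm_over L (fK (ds i))" for i
    using fold_run_head_over[of R L foldable foldR rs ds "Suc i" i]
    unfolding bounded_def by blast+
  then have "inj (\<lambda>i. fK (ds i))" and "range (\<lambda>i. fK (ds i)) \<subseteq> {a. atm_over L a}"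
    using inj_fold_heads by blast+
  then show False
    using finite_atm_over[OF assms(1)] by (meson finite_imageD finite_subset infinite_UNIV_nat)
next
  fix rs ds n
  assume "rs 0 = \<rho>0" "fold_run foldable foldR R rs ds n" "\<not> foldable (rs n) R"
  with assms(2-5) show "intensional (rs n)"
    using fold_run_rule_over[of R L foldable foldR rs ds n n]
    unfolding bounded_def intensional_def by blast
qed

end
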